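(* Let $C>0$ and let $\mu_i$ ($i\in\mathbb{N}$) and $\mu$ be finite Borel measures on $\mathbb{R}$ supported on the compact interval $[0,C]$. Suppose that $\mu_i$ converges weakly to $\mu$ and that there is $\delta>0$ with $\det(\mu_i)\geq\delta$ for all $i$. Then $\lim_{i\to\infty}\mu_i(\{0\}) = \mu(\{0\})$.
   Context: Weak convergence $\mu_i\to\mu$ means $\lim_i\int f\,d\mu_i=\int f\,d\mu$ for every bounded continuous $f\colon\mathbb{R}\to\mathbb{C}$. The Fuglede-Kadison determinant of a finite compactly supported Borel measure $\nu$ on $\mathbb{R}$ is $\det(\nu)=\exp\int_{(0,\infty)}\ln(t)\,d\nu(t)$ (interpreted as $0$ if the integral is $-\infty$). *)

theory Defs
  imports "HOL-Analysis.Analysis"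
begin

definition finite_borel_on :: "real \<Rightarrow> real measure \<Rightarrow> bool" where
  "finite_borel_on C M \<longleftrightarrow> sets M = sets borel \<and> finite_measure M \<and>
     emeasure M (UNIV - {0..C}) = 0"

definition weak_conv :: "(nat \<Rightarrow> real measure) \<Rightarrow> real measure \<Rightarrow> bool" where
  "weak_conv Ms M \<longleftrightarrow>
     (\<forall>f :: real \<Rightarrow> complex. continuous_on UNIV f \<and> bounded (range f) \<longrightarrow>
        (\<lambda>i. integral\<^sup>L (Ms i) f) \<longlonglongrightarrow> integral\<^sup>L M f)"

text \<open>Fuglede-Kadison determinant exp (integral over (0,oo) of ln t); for a finite
  compactly supported measure the integral is either finite (ln integrable on (0,oo))
  or equal to -oo, in which case the determinant is 0.\<close>
definition fk_det :: "real measure \<Rightarrow> real" where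
  "fk_det M = (if set_integrable M {0<..} ln then exp (LINT t:{0<..}|M. ln t) else 0)"

end

theory Submission
  imports Defs "HOL-Probability.Distribution_Functions" "HOL-Real_Asymp.Real_Asymp"
begin

text \<open>The total masses converge, hence are bounded; together with \<open>det \<mu>\<^sub>i \<ge> \<delta>\<close> this bounds
  the integrals of \<open>ln\<close> over \<open>(0,\<infinity>)\<close> against \<open>\<mu>\<^sub>i\<close> from below, while \<open>ln \<le> ln C\<close> on the support.
  Hence \<open>\<mu>\<^sub>i(0,\<epsilon>] \<le> K / (-ln \<epsilon>)\<close> uniformly in \<open>i\<close>: no mass can creep towards 0 along the
  sequence. Sandwiching the indicator of \<open>{0}\<close> between a continuous cutoff that equals 1 at 0
  and vanishes beyond \<open>\<epsilon>\<close> then transfers weak convergence to the atoms at 0, up to the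
  uniformly small masses of \<open>(0,\<epsilon>]\<close>.\<close>

lemma finite_borel_on_imp_finite_borel_measure:
  "finite_borel_on C M \<Longrightarrow> finite_borel_measure M"
  unfolding finite_borel_on_def finite_borel_measure_def finite_borel_measure_axioms_def by simp

lemma finite_borel_on_AE_support:
  assumes "finite_borel_on C M"
  shows "AE x in M. 0 \<le> x \<and> x \<le> C"
proof (rule AE_I')
  interpret finite_borel_measure M
    using assms by (rule finite_borel_on_imp_finite_borel_measure)
  show "UNIV - {0..C} \<in> null_sets M"
    using assms unfolding finite_borel_on_def by (auto intro: null_setsI)
qed auto

lemma (in finite_borel_measure) integrable_indicator_borel:
  "A \<in> sets borel \<Longrightarrow> integrable M (indicator A :: real \<Rightarrow> real)"
  by (intro integrable_real_indicator) (auto simp: emeasure_eq_measure)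

lemma (in finite_borel_measure) measure_Ioc_tendsto_at_right:
  "((\<lambda>\<epsilon>. measure M {a<..\<epsilon>}) \<longlongrightarrow> 0) (at_right a)"
proof -
  have "((\<lambda>\<epsilon>. cdf M \<epsilon> - cdf M a) \<longlongrightarrow> cdf M a - cdf M a) (at_right a)"
    using cdf_is_right_cont[of a] unfolding continuous_within by (intro tendsto_intros)
  moreover have "eventually (\<lambda>\<epsilon>. cdf M \<epsilon> - cdf M a = measure M {a<..\<epsilon>}) (at_right a)"
    using eventually_at_right_less[of a] by eventually_elim (rule cdf_diff_eq)
  ultimately show ?thesis by (simp add: tendsto_cong)
qed

lemma weak_conv_real_integral:
  fixes g :: "real \<Rightarrow> real"
  assumes "weak_conv Ms M" and "continuous_on UNIV g" and "\<And>x. \<bar>g x\<bar> \<le> B"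
  shows "(\<lambda>i. integral\<^sup>L (Ms i) g) \<longlonglongrightarrow> integral\<^sup>L M g"
proof -
  have "continuous_on UNIV (\<lambda>x. complex_of_real (g x))"
    using assms(2) by (intro continuous_intros)
  moreover have "bounded (range (\<lambda>x. complex_of_real (g x)))"
    unfolding bounded_iff using assms(3) by auto
  ultimately have "(\<lambda>i. integral\<^sup>L (Ms i) (\<lambda>x. complex_of_real (g x)))
      \<longlonglongrightarrow> integral\<^sup>L M (\<lambda>x. complex_of_real (g x))"
    using assms(1) unfolding weak_conv_def by blast
  then show ?thesis
    by (auto dest: tendsto_Re)
qed

lemma weak_conv_total_mass:
  "weak_conv Ms M \<Longrightarrow> (\<lambda>i. measure (Ms i) (space (Ms i))) \<longlonglongrightarrow> measure M (space M)"
  using weak_conv_real_integral[of Ms M "\<lambda>_. 1" 1] by simp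

lemma fk_det_ge_imp_ln_integral_ge:
  assumes "fk_det M \<ge> \<delta>" and "\<delta> > 0"
  shows "set_integrable M {0<..} ln" and "ln \<delta> \<le> (LINT t:{0<..}|M. ln t)"
proof -
  show integrable: "set_integrable M {0<..} ln"
    using assms unfolding fk_det_def by (auto split: if_splits)
  have "\<delta> \<le> exp (LINT t:{0<..}|M. ln t)"
    using assms(1) integrable unfolding fk_det_def by simp
  then show "ln \<delta> \<le> (LINT t:{0<..}|M. ln t)"
    using assms(2) by (metis ln_exp ln_le_cancel_iff exp_gt_zero)
qed

text \<open>The integrand \<open>ln\<close> is dominated on \<open>(0,C]\<close> by \<open>ln \<epsilon>\<close> on \<open>(0,\<epsilon>]\<close> plus \<open>max (ln C) 0\<close>.\<close>

lemma fk_det_mass_near_zero: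
  assumes M: "finite_borel_on C M" and "fk_det M \<ge> \<delta>" "\<delta> > 0" and "0 < \<epsilon>" "\<epsilon> < 1"
  shows "measure M {0<..\<epsilon>} * - ln \<epsilon> \<le> max (ln C) 0 * measure M UNIV - ln \<delta>"
proof -
  interpret finite_borel_measure M
    using M by (rule finite_borel_on_imp_finite_borel_measure)
  define g where "g t = ln \<epsilon> * indicator {0<..\<epsilon>} t + max (ln C) 0 * indicator {0<..} t" for t :: real
  have "ln \<delta> \<le> (LINT t:{0<..}|M. ln t)"
    using fk_det_ge_imp_ln_integral_ge assms by blast
  also have "\<dots> \<le> integral\<^sup>L M g"
    unfolding set_lebesgue_integral_def
  proof (rule integral_mono_AE)
    show "integrable M (\<lambda>t. indicator {0<..} t *\<^sub>R ln t)"
      using fk_det_ge_imp_ln_integral_ge assms unfolding set_integrable_def by blast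
    show "integrable M g"
      using integrable_indicator_borel[of "{0<..\<epsilon>}"] integrable_indicator_borel[of "{0<..}"]
      unfolding g_def by auto
    show "AE t in M. indicator {0<..} t *\<^sub>R ln t \<le> g t"
      using finite_borel_on_AE_support[OF M]
    proof eventually_elim
      case (elim t)
      consider "t \<le> 0" | "0 < t" "t \<le> \<epsilon>" | "\<epsilon> < t" by linarith
      then show ?case
      proof cases
        case 2
        then have "ln t \<le> ln \<epsilon>" "g t = ln \<epsilon> + max (ln C) 0"
          by (simp_all add: g_def)
        then show ?thesis using 2 by (simp del: ln_le_cancel_iff)
      next
        case 3
        then have "ln t \<le> ln C" using elim \<open>0 < \<epsilon>\<close> by simp
        then show ?thesis using 3 \<open>0 < \<epsilon>\<close> by (simp add: g_def)
      qed (simp add: g_def)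
    qed
  qed
  also have "integral\<^sup>L M g = ln \<epsilon> * measure M {0<..\<epsilon>} + max (ln C) 0 * measure M {0<..}"
    unfolding g_def by (simp add: integrable_indicator_borel borel_UNIV)
  also have "\<dots> \<le> ln \<epsilon> * measure M {0<..\<epsilon>} + max (ln C) 0 * measure M UNIV"
    by (intro add_left_mono mult_left_mono finite_measure_mono) auto
  finally show ?thesis by (simp add: algebra_simps)
qed

lemma fk_det_uniformly_small_mass_near_zero:
  assumes "\<And>i. finite_borel_on C (Ms i)" and "\<And>i. fk_det (Ms i) \<ge> \<delta>" and "\<delta> > 0"
    and "Bseq (\<lambda>i. measure (Ms i) UNIV)" and "e > 0"
  shows "eventually (\<lambda>\<epsilon>. \<forall>i. measure (Ms i) {0<..\<epsilon>} \<le> e) (at_right 0)"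
proof -
  obtain B where "\<forall>i. norm (measure (Ms i) UNIV) \<le> B"
    using assms(4) by (meson BseqE)
  then have mass_bound: "\<And>i. measure (Ms i) UNIV \<le> B"
    by simp
  define K where "K = max (ln C) 0 * B - ln \<delta>"
  have "((\<lambda>\<epsilon>. K / - ln \<epsilon>) \<longlongrightarrow> 0) (at_right (0::real))"
    by real_asymp
  then have "eventually (\<lambda>\<epsilon>. K / - ln \<epsilon> < e) (at_right 0)"
    using \<open>e > 0\<close> by (rule order_tendstoD)
  moreover have "eventually (\<lambda>\<epsilon>. \<epsilon> < 1) (at_right (0::real))"
    by real_asymp
  ultimately show ?thesis
    using eventually_at_right_less[of 0]
  proof eventually_elim
    case (elim \<epsilon>)
    have "measure (Ms i) {0<..\<epsilon>} \<le> K / - ln \<epsilon>" for i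
    proof -
      have "measure (Ms i) {0<..\<epsilon>} * - ln \<epsilon> \<le> max (ln C) 0 * measure (Ms i) UNIV - ln \<delta>"
        using fk_det_mass_near_zero assms elim by blast
      also have "\<dots> \<le> K"
        unfolding K_def using mass_bound by (intro diff_right_mono mult_left_mono) auto
      finally show ?thesis
        using elim by (intro pos_le_divide_eq[THEN iffD2]) auto
    qed
    then show ?case using elim by (auto intro: order_trans less_imp_le)
  qed
qed

definition cutoff :: "real \<Rightarrow> real \<Rightarrow> real" where
  "cutoff \<epsilon> x = max 0 (min 1 (1 - x * inverse \<epsilon>))"

lemma continuous_on_cutoff: "continuous_on UNIV (cutoff \<epsilon>)"
  unfolding cutoff_def by (intro continuous_intros)

lemma abs_cutoff_le: "\<bar>cutoff \<epsilon> x\<bar> \<le> 1"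
  unfolding cutoff_def by auto

lemma cutoff_integral_approx_atom:
  assumes M: "finite_borel_on C M" and "\<epsilon> > 0"
  shows "\<bar>integral\<^sup>L M (cutoff \<epsilon>) - measure M {0}\<bar> \<le> measure M {0<..\<epsilon>}"
proof -
  interpret finite_borel_measure M
    using M by (rule finite_borel_on_imp_finite_borel_measure)
  have cutoff_integrable: "integrable M (cutoff \<epsilon>)"
    by (rule integrable_const_bound[where B=1])
       (auto simp: abs_cutoff_le measurable_cong_sets[OF M_is_borel refl]
             intro: borel_measurable_continuous_onI continuous_on_cutoff)
  have "AE x in M. indicator {0} x \<le> cutoff \<epsilon> x \<and> cutoff \<epsilon> x \<le> (indicator {0..\<epsilon>} x :: real)"
    using finite_borel_on_AE_support[OF M]
  proof eventually_elim
    case (elim x)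
    show ?case
    proof (cases "x \<le> \<epsilon>")
      case False
      then have "1 - x * inverse \<epsilon> < 0" using \<open>\<epsilon> > 0\<close> by (simp add: field_simps)
      then show ?thesis using False \<open>\<epsilon> > 0\<close> by (simp add: cutoff_def indicator_def)
    qed (use elim in \<open>auto simp: cutoff_def indicator_def\<close>)
  qed
  then have "AE x in M. indicator {0} x \<le> cutoff \<epsilon> x" "AE x in M. cutoff \<epsilon> x \<le> (indicator {0..\<epsilon>} x :: real)"
    by (auto elim: eventually_mono)
  then have "measure M {0} \<le> integral\<^sup>L M (cutoff \<epsilon>)" "integral\<^sup>L M (cutoff \<epsilon>) \<le> measure M {0..\<epsilon>}"
    using integral_mono_AE[OF integrable_indicator_borel cutoff_integrable, of "{0}"]
      integral_mono_AE[OF cutoff_integrable integrable_indicator_borel, of "{0..\<epsilon>}"]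
    by (simp_all add: borel_UNIV)
  moreover have "measure M {0..\<epsilon>} = measure M {0} + measure M {0<..\<epsilon>}"
    using \<open>\<epsilon> > 0\<close> by (subst finite_measure_Union[symmetric]) (auto intro!: arg_cong[where f="measure M"])
  ultimately show ?thesis by linarith
qed

lemma LIMSEQ_by_uniform_approximation:
  fixes a :: "nat \<Rightarrow> real"
  assumes "\<And>e. e > 0 \<Longrightarrow> \<exists>g G. g \<longlonglongrightarrow> G \<and> (\<forall>i. \<bar>a i - g i\<bar> \<le> e) \<and> \<bar>b - G\<bar> \<le> e"
  shows "a \<longlonglongrightarrow> b"
proof (rule LIMSEQ_I)
  fix r :: real
  assume "r > 0"
  then obtain g G where g: "g \<longlonglongrightarrow> G" "\<And>i. \<bar>a i - g i\<bar> \<le> r / 4" "\<bar>b - G\<bar> \<le> r / 4"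
    using assms[of "r / 4"] by auto
  obtain N where N: "\<And>i. i \<ge> N \<Longrightarrow> norm (g i - G) < r / 4"
    using LIMSEQ_D[OF g(1), of "r / 4"] \<open>r > 0\<close> by auto
  then have "norm (a i - b) < r" if "i \<ge> N" for i
    using g(2)[of i] g(3) N[OF that] unfolding real_norm_def abs_le_iff abs_less_iff by linarith
  then show "\<exists>N. \<forall>i\<ge>N. norm (a i - b) < r" by blast
qed

lemma weak_conv_tendsto_measure_0:
  assumes "weak_conv Ms M" and "\<And>i. finite_borel_on C (Ms i)" and "finite_borel_on C M"
    and "\<And>e. e > 0 \<Longrightarrow> eventually (\<lambda>\<epsilon>. \<forall>i. measure (Ms i) {0<..\<epsilon>} \<le> e) (at_right 0)"
  shows "(\<lambda>i. measure (Ms i) {0}) \<longlonglongrightarrow> measure M {0}"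
proof (rule LIMSEQ_by_uniform_approximation)
  fix e :: real
  assume "e > 0"
  interpret M: finite_borel_measure M
    using assms(3) by (rule finite_borel_on_imp_finite_borel_measure)
  have "eventually (\<lambda>\<epsilon>. measure M {0<..\<epsilon>} < e) (at_right 0)"
    using M.measure_Ioc_tendsto_at_right \<open>e > 0\<close> by (rule order_tendstoD)
  with assms(4)[OF \<open>e > 0\<close>] eventually_at_right_less[of "0::real"]
  have "eventually (\<lambda>\<epsilon>. (\<forall>i. measure (Ms i) {0<..\<epsilon>} \<le> e) \<and> measure M {0<..\<epsilon>} < e \<and> 0 < \<epsilon>)
      (at_right 0)"
    by eventually_elim blast
  then obtain \<epsilon> where small: "\<And>i. measure (Ms i) {0<..\<epsilon>} \<le> e" "measure M {0<..\<epsilon>} < e" and "0 < \<epsilon>"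
    using eventually_happens'[OF trivial_limit_at_right_real] by blast
  show "\<exists>g G. g \<longlonglongrightarrow> G \<and> (\<forall>i. \<bar>measure (Ms i) {0} - g i\<bar> \<le> e) \<and> \<bar>measure M {0} - G\<bar> \<le> e"
  proof (intro exI conjI allI)
    show "(\<lambda>i. integral\<^sup>L (Ms i) (cutoff \<epsilon>)) \<longlonglongrightarrow> integral\<^sup>L M (cutoff \<epsilon>)"
      using assms(1) continuous_on_cutoff abs_cutoff_le by (rule weak_conv_real_integral)
    show "\<bar>measure (Ms i) {0} - integral\<^sup>L (Ms i) (cutoff \<epsilon>)\<bar> \<le> e" for i
      using cutoff_integral_approx_atom[OF assms(2) \<open>0 < \<epsilon>\<close>, of i] small(1)[of i] by linarith
    show "\<bar>measure M {0} - integral\<^sup>L M (cutoff \<epsilon>)\<bar> \<le> e"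
      using cutoff_integral_approx_atom[OF assms(3) \<open>0 < \<epsilon>\<close>] small(2) by linarith
  qed
qed

theorem mainTheorem3:
  fixes C \<delta> :: real and \<mu>s :: "nat \<Rightarrow> real measure" and \<mu> :: "real measure"
  assumes "C > 0"
    and "\<And>i. finite_borel_on C (\<mu>s i)"
    and "finite_borel_on C \<mu>"
    and "weak_conv \<mu>s \<mu>"
    and "\<delta> > 0"
    and "\<And>i. fk_det (\<mu>s i) \<ge> \<delta>"
  shows "(\<lambda>i. measure (\<mu>s i) {0}) \<longlonglongrightarrow> measure \<mu> {0}"
proof (rule weak_conv_tendsto_measure_0[OF assms(4) assms(2) assms(3)])
  have "space (\<mu>s i) = UNIV" for i
    using assms(2) by (metis finite_borel_measure.borel_UNIV finite_borel_on_imp_finite_borel_measure)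
  then have "Bseq (\<lambda>i. measure (\<mu>s i) UNIV)"
    using convergent_imp_Bseq[OF convergentI[OF weak_conv_total_mass[OF assms(4)]]] by simp
  then show "eventually (\<lambda>\<epsilon>. \<forall>i. measure (\<mu>s i) {0<..\<epsilon>} \<le> e) (at_right 0)" if "e > 0" for e
    using fk_det_uniformly_small_mass_near_zero[where Ms=\<mu>s, OF assms(2,6,5)] that by blast
qed

end
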